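(* Let $(\mathfrak S_A,\mathfrak E_A,\epsilon^{\mathfrak S_A})$ and $(\mathfrak S_B,\mathfrak E_B,\epsilon^{\mathfrak S_B})$ be States/Effects Chu spaces whose spaces of states admit a description in terms of pure states. Then the set of completely meet-irreducible elements of $\mathfrak S_A\widetilde{\otimes}\mathfrak S_B$ equals $$\{\sigma_A\widetilde{\otimes}\sigma_B\mid\sigma_A\in\mathfrak S_A^{pure},\ \sigma_B\in\mathfrak S_B^{pure}\},$$ and this set equals the set of maximal elements of $\mathfrak S_A\widetilde{\otimes}\mathfrak S_B$.
   Context: The boolean domain is $\mathfrak{B}=\{Y,N,\bot\}$, ordered by $u\le v$ iff $u=\bot$ or $u=v$; nonempty infima $\bigwedge$: $Y$ (resp. $N$) if all members are $Y$ (resp. $N$), else $\bot$. Product $\bullet$: $x\bullet Y=x$, $x\bullet N=N$, $\bot\bullet\bot=\bot$ (commutative); involution $\overline{\bot}=\bot$, $\overline{Y}=N$, $\overline{N}=Y$. A space of states is a poset $(\mathfrak S,\sqsubseteq)$ with bottom $\bot_{\mathfrak S}$ in which every nonempty subset has an infimum. The natural space of effects $\mathfrak E_{\mathfrak S}$ consists of formal symbols $\mathfrak l_{(\sigma,\sigma')}$ ($\sigma,\sigma'$ with no common upper bound), $\mathfrak l_{(\sigma,\cdot)}$, $\mathfrak l_{(\cdot,\sigma)}$, $\mathfrak l_{(\cdot,\cdot)}$, with evaluation $\epsilon_{\mathfrak l_{(a,b)}}(\sigma)=Y$ if $a\sqsubseteq\sigma$, $N$ if $b\sqsubseteq\sigma$,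 $\bot$ otherwise ("$\cdot\sqsubseteq\sigma$" false), ordered by pointwise comparison of evaluations (nonempty infima exist and are pointwise). $\overline{\mathfrak l_{(a,b)}}=\mathfrak l_{(b,a)}$, $\mathfrak Y_{\mathfrak E}=\mathfrak l_{(\bot_{\mathfrak S},\cdot)}$, $\bot_{\mathfrak E}=\mathfrak l_{(\cdot,\cdot)}$. A States/Effects Chu space $(\mathfrak S,\mathfrak E,\epsilon)$: $\mathfrak E\subseteq\mathfrak E_{\mathfrak S}$ such that (i) each $\sigma\ne\bot_{\mathfrak S}$ has some $\sigma'\ne\bot_{\mathfrak S}$ with $\mathfrak l_{(\sigma,\sigma')}\in\mathfrak E$; (ii) $\mathfrak E$ is closed under nonempty infima of $\mathfrak E_{\mathfrak S}$; (iii) closed under bar; (iv) contains $\mathfrak Y_{\mathfrak E},\bot_{\mathfrak E}$. $\mathfrak S$ admits a description in terms of pure states if its set $\mathfrak S^{pure}$ of completely meet-irreducible elements equals its set of maximal elements and every $\sigma$ is the infimum of the pure states above it. The pure tensor $\sigma_A\widetilde{\otimes}\sigma_B$ is the map $\mathfrak E_A\times\mathfrak E_B\to\mathfrak B$, $(\mathfrak l_A,\mathfrak l_B)\mapsto\epsilon^{\mathfrak S_A}_{\mathfrak l_A}(\sigma_A)\bullet\epsilon^{\mathfrak S_B}_{\mathfrak l_B}(\sigma_B)$; the minimal tensor product $\mathfrak S_A\widetilde{\otimes}\mathfrak S_B$ is the set of pointwise infima of nonempty families of pure tensors, ordered pointwise (it is closed under infima of nonempty subsets). *)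

theory Defs
  imports Main
begin

datatype bdom = Y | N | Bot

definition leB :: "bdom \<Rightarrow> bdom \<Rightarrow> bool" where
  "leB u v \<longleftrightarrow> u = Bot \<or> u = v"

definition infB :: "bdom set \<Rightarrow> bdom" where
  "infB X = (if X = {Y} then Y else if X = {N} then N else Bot)"

fun prodB :: "bdom \<Rightarrow> bdom \<Rightarrow> bdom" where
  "prodB x Y = x"
| "prodB x N = N"
| "prodB Y Bot = Bot"
| "prodB N Bot = N"
| "prodB Bot Bot = Bot"

fun barB :: "bdom \<Rightarrow> bdom" where
  "barB Y = N" | "barB N = Y" | "barB Bot = Bot"

definition is_inf :: "'x set \<Rightarrow> ('x \<Rightarrow> 'x \<Rightarrow> bool) \<Rightarrow> 'x set \<Rightarrow> 'x \<Rightarrow> bool" where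
  "is_inf P le X i \<longleftrightarrow> i \<in> P \<and> (\<forall>x\<in>X. le i x) \<and> (\<forall>j\<in>P. (\<forall>x\<in>X. le j x) \<longrightarrow> le j i)"

definition cmi :: "'x set \<Rightarrow> ('x \<Rightarrow> 'x \<Rightarrow> bool) \<Rightarrow> 'x \<Rightarrow> bool" where
  "cmi P le x \<longleftrightarrow> x \<in> P \<and> (\<forall>X. X \<subseteq> P \<and> X \<noteq> {} \<and> is_inf P le X x \<longrightarrow> x \<in> X)"

definition maximal_in :: "'x set \<Rightarrow> ('x \<Rightarrow> 'x \<Rightarrow> bool) \<Rightarrow> 'x \<Rightarrow> bool" where
  "maximal_in P le x \<longleftrightarrow> x \<in> P \<and> (\<forall>y\<in>P. le x y \<longrightarrow> y = x)"

definition states_space :: "('a::order) itself \<Rightarrow> bool" where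
  "states_space _ \<longleftrightarrow> (\<exists>b::'a. \<forall>x. b \<le> x)
     \<and> (\<forall>X::'a set. X \<noteq> {} \<longrightarrow> (\<exists>i. is_inf UNIV (\<le>) X i))"

definition botS :: "'a::order" where
  "botS = (THE b. \<forall>x. b \<le> x)"

definition pure_states :: "('a::order) set" where
  "pure_states = {x. cmi UNIV (\<le>) x}"

definition pure_description :: "('a::order) itself \<Rightarrow> bool" where
  "pure_description _ \<longleftrightarrow>
     (pure_states :: 'a set) = {x. maximal_in UNIV (\<le>) x}
     \<and> (\<forall>s::'a. is_inf UNIV (\<le>) {p \<in> pure_states. s \<le> p} s)"

text \<open>The formal symbol l_(a,b) is represented by the pair (a,b) of optional states;
  None stands for the placeholder symbol.\<close>
type_synonym 'a eff = "'a option \<times> 'a option"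

fun below :: "'a::order option \<Rightarrow> 'a \<Rightarrow> bool" where
  "below None s = False"
| "below (Some a) s = (a \<le> s)"

fun evalE :: "'a::order eff \<Rightarrow> 'a \<Rightarrow> bdom" where
  "evalE (a, b) s = (if below a s then Y else if below b s then N else Bot)"

definition natural_effects :: "'a::order eff set" where
  "natural_effects = {(a, b). case (a, b) of
      (Some s, Some t) \<Rightarrow> \<not> (\<exists>u. s \<le> u \<and> t \<le> u)
    | _ \<Rightarrow> True}"

fun barE :: "'a eff \<Rightarrow> 'a eff" where
  "barE (a, b) = (b, a)"

text \<open>States/Effects Chu space (S, E, evaluation) with S the type 'a.\<close>
definition chu_space :: "('a::order) eff set \<Rightarrow> bool" where
  "chu_space E \<longleftrightarrow> states_space TYPE('a)
     \<and> E \<subseteq> natural_effects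
     \<and> (\<forall>s::'a. s \<noteq> botS \<longrightarrow> (\<exists>s'. s' \<noteq> botS \<and> (Some s, Some s') \<in> E))
     \<and> (\<forall>F. F \<subseteq> E \<and> F \<noteq> {} \<longrightarrow>
          (\<forall>g\<in>natural_effects. (\<forall>s. evalE g s = infB ((\<lambda>f. evalE f s) ` F)) \<longrightarrow> g \<in> E))
     \<and> (\<forall>e\<in>E. barE e \<in> E)
     \<and> (Some botS, None) \<in> E \<and> (None, None) \<in> E"

text \<open>Maps on E_A \<times> E_B; outside E_A \<times> E_B the value is fixed to Bot (irrelevant).\<close>
definition pure_tensor :: "('a::order) eff set \<Rightarrow> ('b::order) eff set \<Rightarrow> 'a \<Rightarrow> 'b
    \<Rightarrow> ('a eff \<times> 'b eff \<Rightarrow> bdom)" where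
  "pure_tensor EA EB sa sb = (\<lambda>(la, lb).
     if la \<in> EA \<and> lb \<in> EB then prodB (evalE la sa) (evalE lb sb) else Bot)"

definition pw_inf :: "('x \<Rightarrow> bdom) set \<Rightarrow> ('x \<Rightarrow> bdom)" where
  "pw_inf F = (\<lambda>x. infB ((\<lambda>f. f x) ` F))"

definition leT :: "('x \<Rightarrow> bdom) \<Rightarrow> ('x \<Rightarrow> bdom) \<Rightarrow> bool" where
  "leT f g \<longleftrightarrow> (\<forall>x. leB (f x) (g x))"

definition min_tensor :: "('a::order) eff set \<Rightarrow> ('b::order) eff set
    \<Rightarrow> ('a eff \<times> 'b eff \<Rightarrow> bdom) set" where
  "min_tensor EA EB = {pw_inf F | F. F \<noteq> {} \<and>
      F \<subseteq> {pure_tensor EA EB sa sb | sa sb. True}}"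

end

theory Submission
  imports Defs
begin

text \<open>
  Pure tensors depend monotonically on their factors, and they also reflect the order: pairing
  an effect of one factor with the unit effect of the other recovers that factor's evaluation,
  and by axiom (i) \<open>\<sigma> \<sqsubseteq> \<sigma>'\<close> as soon as every effect taking the value \<open>Y\<close> at \<open>\<sigma>\<close> takes it
  at \<open>\<sigma>'\<close>. As pure states are maximal, nothing in the minimal tensor product lies strictly
  above a pure tensor of pure states; these are therefore maximal, hence completely
  meet-irreducible. Conversely, every state is the infimum of the pure states above it and a
  value \<open>Y\<close> or \<open>N\<close> of a product is determined by its factors, so every pure tensor, and hence
  every element \<open>t\<close> of the minimal tensor product, is the pointwise infimum of the pure tensors
  of pure states above \<open>t\<close>. A maximal or completely meet-irreducible \<open>t\<close> must be one of them.
\<close>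

lemma leB_refl: "leB u u"
  by (simp add: leB_def)

lemma leB_trans: "leB u v \<Longrightarrow> leB v w \<Longrightarrow> leB u w"
  by (auto simp: leB_def)

lemma leB_antisym: "leB u v \<Longrightarrow> leB v u \<Longrightarrow> u = v"
  by (auto simp: leB_def)

lemma leT_trans: "leT f g \<Longrightarrow> leT g h \<Longrightarrow> leT f h"
  unfolding leT_def using leB_trans by blast

lemma leT_antisym: "leT f g \<Longrightarrow> leT g f \<Longrightarrow> f = g"
  unfolding leT_def using leB_antisym by blast

lemma infB_le: "v \<in> S \<Longrightarrow> leB (infB S) v"
  by (auto simp: infB_def leB_def)

lemma infB_eq_imp_singleton: "infB S = v \<Longrightarrow> v \<noteq> Bot \<Longrightarrow> S = {v}"
  by (auto simp: infB_def split: if_splits)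

lemma infB_singleton: "infB {v} = v"
  by (cases v) (simp_all add: infB_def)

lemma pw_inf_le: "f \<in> F \<Longrightarrow> leT (pw_inf F) f"
  unfolding leT_def pw_inf_def using infB_le by blast

lemma pw_inf_greatest:
  assumes "F \<noteq> {}" and "\<And>f. f \<in> F \<Longrightarrow> leT g f"
  shows "leT g (pw_inf F)"
  unfolding leT_def pw_inf_def
proof
  fix x
  show "leB (g x) (infB ((\<lambda>f. f x) ` F))"
  proof (cases "g x = Bot")
    case False
    then have "(\<lambda>f. f x) ` F = {g x}"
      using assms by (auto simp: leT_def leB_def) metis+
    then show ?thesis by (simp add: infB_singleton leB_refl)
  qed (simp add: leB_def)
qed

lemma pw_inf_singleton: "pw_inf {f} = f"
  by (simp add: pw_inf_def infB_singleton)

lemma pw_inf_apply_non_Bot: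
  assumes "pw_inf F x \<noteq> Bot" and "f \<in> F"
  shows "f x = pw_inf F x"
  using infB_eq_imp_singleton[OF _ assms(1)[unfolded pw_inf_def]] assms(2)
  by (auto simp: pw_inf_def)

lemma is_inf_pw_inf:
  assumes "F \<noteq> {}" and "pw_inf F \<in> P"
  shows "is_inf P leT F (pw_inf F)"
  unfolding is_inf_def using assms by (blast intro: pw_inf_le pw_inf_greatest)

lemma cmiD: "cmi P le x \<Longrightarrow> X \<subseteq> P \<Longrightarrow> X \<noteq> {} \<Longrightarrow> is_inf P le X x \<Longrightarrow> x \<in> X"
  by (simp add: cmi_def)

lemma maximal_in_imp_cmi:
  assumes "maximal_in P le x"
  shows "cmi P le x"
  unfolding cmi_def
proof (intro conjI allI impI)
  show "x \<in> P"
    using assms by (simp add: maximal_in_def)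
next
  fix X assume X: "X \<subseteq> P \<and> X \<noteq> {} \<and> is_inf P le X x"
  then obtain y where "y \<in> X" by blast
  moreover have "le x y"
    using X \<open>y \<in> X\<close> by (simp add: is_inf_def)
  ultimately show "x \<in> X"
    using X assms by (auto simp: maximal_in_def)
qed

lemma prodB_eq_Y_iff: "prodB x y = Y \<longleftrightarrow> x = Y \<and> y = Y"
  by (cases x; cases y) auto

lemma prodB_eq_N_iff: "prodB x y = N \<longleftrightarrow> x = N \<or> y = N"
  by (cases x; cases y) auto

lemma prodB_Y_left: "prodB Y y = y"
  by (cases y) auto

lemma prodB_mono: "leB x x' \<Longrightarrow> leB y y' \<Longrightarrow> leB (prodB x y) (prodB x' y')"
  by (cases x; cases y; cases x'; cases y') (auto simp: leB_def)

lemma evalE_mono: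
  assumes "l \<in> natural_effects" and "(s::'a::order) \<le> s'"
  shows "leB (evalE l s) (evalE l s')"
  using assms
  by (cases l; cases "fst l"; cases "snd l") (auto simp: natural_effects_def leB_def intro: order_trans)

lemma pure_tensor_mono:
  assumes "EA \<subseteq> natural_effects" and "EB \<subseteq> natural_effects"
    and "(sa::'a::order) \<le> sa'" and "(sb::'b::order) \<le> sb'"
  shows "leT (pure_tensor EA EB sa sb) (pure_tensor EA EB sa' sb')"
  unfolding leT_def pure_tensor_def
  using assms by (auto simp: leB_def[of Bot] simp del: evalE.simps intro!: prodB_mono evalE_mono)

lemma botS_least:
  assumes "states_space TYPE('a::order)"
  shows "botS \<le> (s::'a)"
proof -
  obtain b :: 'a where b: "\<forall>s. b \<le> s"
    using assms unfolding states_space_def by blast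
  have "botS = b"
    unfolding botS_def by (rule the_equality) (use b in \<open>auto intro: antisym\<close>)
  with b show ?thesis by simp
qed

lemma evalE_unit:
  assumes "states_space TYPE('a::order)"
  shows "evalE (Some botS, None) (s::'a) = Y"
  using botS_least[OF assms] by simp

lemma chu_space_le_if_evalE_Y:
  assumes E: "chu_space E"
    and Y: "\<And>l. l \<in> E \<Longrightarrow> evalE l s = Y \<Longrightarrow> evalE l s' = Y"
  shows "(s::'a::order) \<le> s'"
proof (cases "s = botS")
  case True
  then show ?thesis
    using E botS_least by (auto simp: chu_space_def)
next
  case False
  then obtain t where "(Some s, Some t) \<in> E"
    using E by (auto simp: chu_space_def)
  from Y[OF this] show ?thesis
    by (auto split: if_splits)
qed

lemma pure_tensor_le_imp_le:
  fixes EA :: "('a::order) eff set" and EB :: "('b::order) eff set"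
  assumes A: "chu_space EA" and B: "chu_space EB"
    and le: "leT (pure_tensor EA EB sa sb) (pure_tensor EA EB sa' sb')"
  shows "sa \<le> sa' \<and> sb \<le> sb'"
proof
  have "states_space TYPE('a)" "states_space TYPE('b)"
    using A B by (simp_all add: chu_space_def)
  note unit_Y = evalE_unit[OF this(1)] evalE_unit[OF this(2)]
  let ?unitA = "(Some (botS::'a), None::'a option)"
  let ?unitB = "(Some (botS::'b), None::'b option)"
  have unit: "?unitA \<in> EA" "?unitB \<in> EB"
    using A B by (simp_all add: chu_space_def)
  have le_Y: "pure_tensor EA EB sa' sb' z = Y" if "pure_tensor EA EB sa sb z = Y" for z
  proof -
    from le have "leB (pure_tensor EA EB sa sb z) (pure_tensor EA EB sa' sb' z)"
      unfolding leT_def by blast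
    with that show ?thesis by (simp add: leB_def)
  qed
  show "sa \<le> sa'"
    using A
  proof (rule chu_space_le_if_evalE_Y)
    fix l assume "l \<in> EA" "evalE l sa = Y"
    then show "evalE l sa' = Y"
      using le_Y[of "(l, ?unitB)"] unit unit_Y by (simp add: pure_tensor_def)
  qed
  show "sb \<le> sb'"
    using B
  proof (rule chu_space_le_if_evalE_Y)
    fix l assume "l \<in> EB" "evalE l sb = Y"
    then show "evalE l sb' = Y"
      using le_Y[of "(?unitA, l)"] unit unit_Y by (simp add: pure_tensor_def prodB_Y_left)
  qed
qed

lemma pure_state_above:
  fixes s :: "'a::order"
  assumes "pure_description TYPE('a)"
  obtains p where "p \<in> pure_states" and "s \<le> p"
proof (cases "\<exists>p\<in>pure_states. s \<le> p")
  case False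
  then have "{p \<in> pure_states. s \<le> p} = {}" by blast
  moreover have "is_inf UNIV (\<le>) {p \<in> pure_states. s \<le> p} s"
    using assms unfolding pure_description_def by blast
  ultimately have "maximal_in UNIV (\<le>) s"
    by (auto simp: is_inf_def maximal_in_def intro: antisym)
  then have "s \<in> pure_states"
    using assms unfolding pure_description_def by blast
  with False show ?thesis by blast
qed (use that in blast)

lemma pure_state_maximal:
  assumes "pure_description TYPE('a::order)" and "(p::'a) \<in> pure_states" and "p \<le> s"
  shows "s = p"
  using assms unfolding pure_description_def maximal_in_def by blast

lemma evalE_eq_if_pure_above:
  fixes s :: "'a::order"
  assumes pd: "pure_description TYPE('a)" and v: "v \<noteq> Bot"
    and pure_l: "\<And>p. p \<in> pure_states \<Longrightarrow> s \<le> p \<Longrightarrow> evalE l p = v"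
  shows "evalE l s = v"
proof -
  obtain a b where l: "l = (a, b)"
    by (rule prod.exhaust)
  note pure = pure_l[unfolded l]
  have inf: "is_inf UNIV (\<le>) {p \<in> pure_states. s \<le> p} s"
    using pd unfolding pure_description_def by blast
  have below_if_below_pure: "below c s" if "\<And>p. p \<in> pure_states \<Longrightarrow> s \<le> p \<Longrightarrow> below c p" for c
  proof (cases c)
    case None
    obtain p where "p \<in> pure_states" "s \<le> p"
      using pure_state_above[OF pd] by blast
    with that None show ?thesis by auto
  next
    case (Some c')
    with that have "\<forall>p\<in>{p \<in> pure_states. s \<le> p}. c' \<le> p" by auto
    with inf Some show ?thesis by (simp add: is_inf_def)
  qed
  show ?thesis
  proof (cases v)
    case Y
    have "below a p" if "p \<in> pure_states" "s \<le> p" for p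
      using pure[OF that] Y by (auto split: if_splits)
    with Y l below_if_below_pure show ?thesis by simp
  next
    case N
    obtain p where p: "p \<in> pure_states" "s \<le> p"
      using pure_state_above[OF pd] by blast
    with pure[OF p] N have "\<not> below a p"
      by (auto split: if_splits)
    with p have "\<not> below a s"
      by (cases a) (auto intro: order_trans)
    moreover have "below b p" if "p \<in> pure_states" "s \<le> p" for p
      using pure[OF that] N by (auto split: if_splits)
    then have "below b s" by (rule below_if_below_pure)
    ultimately show ?thesis using N l by simp
  qed (use v in simp)
qed

lemma pure_tensor_apply_eq_if_pure_above:
  fixes EA :: "('a::order) eff set" and EB :: "('b::order) eff set"
  assumes pdA: "pure_description TYPE('a)" and pdB: "pure_description TYPE('b)"
    and v: "v \<noteq> Bot"
    and pure: "\<And>pa pb. pa \<in> pure_states \<Longrightarrow> sa \<le> pa \<Longrightarrow> pb \<in> pure_states \<Longrightarrow> sb \<le> pb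
                 \<Longrightarrow> pure_tensor EA EB pa pb (la, lb) = v"
  shows "pure_tensor EA EB sa sb (la, lb) = v"
proof -
  obtain pa0 where pa0: "pa0 \<in> pure_states" "sa \<le> pa0"
    using pure_state_above[OF pdA] by blast
  obtain pb0 where pb0: "pb0 \<in> pure_states" "sb \<le> pb0"
    using pure_state_above[OF pdB] by blast
  have effects: "la \<in> EA \<and> lb \<in> EB"
    using pure[OF pa0 pb0] v by (auto simp: pure_tensor_def split: if_splits)
  then have prod: "prodB (evalE la pa) (evalE lb pb) = v"
    if "pa \<in> pure_states" "sa \<le> pa" "pb \<in> pure_states" "sb \<le> pb" for pa pb
    using pure[OF that] by (simp add: pure_tensor_def)
  have "prodB (evalE la sa) (evalE lb sb) = v"
  proof (cases v)
    case Y
    have "evalE la sa = Y"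
      by (rule evalE_eq_if_pure_above[OF pdA])
        (use prod[OF _ _ pb0] Y in \<open>simp_all add: prodB_eq_Y_iff\<close>)
    moreover have "evalE lb sb = Y"
      by (rule evalE_eq_if_pure_above[OF pdB])
        (use prod[OF pa0] Y in \<open>simp_all add: prodB_eq_Y_iff\<close>)
    ultimately show ?thesis using Y by simp
  next
    case N
    have "evalE la sa = N \<or> evalE lb sb = N"
    proof (rule ccontr)
      assume "\<not> ?thesis"
      then obtain pa pb where "pa \<in> pure_states" "sa \<le> pa" "pb \<in> pure_states" "sb \<le> pb"
        and "evalE la pa \<noteq> N" "evalE lb pb \<noteq> N"
        using evalE_eq_if_pure_above[OF pdA, where v = N and s = sa and l = la]
          evalE_eq_if_pure_above[OF pdB, where v = N and s = sb and l = lb] by auto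
      with prod N show False by (metis prodB_eq_N_iff)
    qed
    with N show ?thesis by (auto simp: prodB_eq_N_iff)
  qed (use v in simp)
  with effects show ?thesis by (simp add: pure_tensor_def)
qed

lemma pure_tensor_in_min_tensor: "pure_tensor EA EB sa sb \<in> min_tensor EA EB"
  unfolding min_tensor_def
  by (rule CollectI, rule exI[of _ "{pure_tensor EA EB sa sb}"]) (auto simp: pw_inf_singleton)

lemma min_tensorE:
  assumes "t \<in> min_tensor EA EB"
  obtains F where "t = pw_inf F" and "F \<noteq> {}"
    and "F \<subseteq> {pure_tensor EA EB sa sb | sa sb. True}"
  using assms unfolding min_tensor_def by blast

definition pure_tensors_above :: "('a::order) eff set \<Rightarrow> ('b::order) eff set
    \<Rightarrow> ('a eff \<times> 'b eff \<Rightarrow> bdom) \<Rightarrow> ('a eff \<times> 'b eff \<Rightarrow> bdom) set" where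
  "pure_tensors_above EA EB t = {pure_tensor EA EB pa pb | pa pb.
      pa \<in> pure_states \<and> pb \<in> pure_states \<and> leT t (pure_tensor EA EB pa pb)}"

lemma pure_tensors_above_antimono:
  "leT t t' \<Longrightarrow> pure_tensors_above EA EB t' \<subseteq> pure_tensors_above EA EB t"
  unfolding pure_tensors_above_def by (blast intro: leT_trans)

lemma pure_tensors_above_subset_min_tensor:
  "pure_tensors_above EA EB t \<subseteq> min_tensor EA EB"
  unfolding pure_tensors_above_def using pure_tensor_in_min_tensor by blast

lemma le_pw_inf_pure_tensors_above:
  "pure_tensors_above EA EB t \<noteq> {} \<Longrightarrow> leT t (pw_inf (pure_tensors_above EA EB t))"
  by (auto simp: pure_tensors_above_def intro!: pw_inf_greatest)

lemma pure_tensors_above_nonempty: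
  fixes EA :: "('a::order) eff set" and EB :: "('b::order) eff set"
  assumes nA: "EA \<subseteq> natural_effects" and nB: "EB \<subseteq> natural_effects"
    and pdA: "pure_description TYPE('a)" and pdB: "pure_description TYPE('b)"
    and t: "t \<in> min_tensor EA EB"
  shows "pure_tensors_above EA EB t \<noteq> {}"
proof -
  obtain F where F: "t = pw_inf F" "F \<noteq> {}" "F \<subseteq> {pure_tensor EA EB sa sb | sa sb. True}"
    using t by (rule min_tensorE)
  then obtain sa sb where "pure_tensor EA EB sa sb \<in> F" by blast
  with F(1) have t_le: "leT t (pure_tensor EA EB sa sb)"
    by (simp add: pw_inf_le)
  obtain pa pb where p: "pa \<in> pure_states" "sa \<le> pa" "pb \<in> pure_states" "sb \<le> pb"
    using pure_state_above[OF pdA] pure_state_above[OF pdB] by metis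
  have "leT t (pure_tensor EA EB pa pb)"
    using leT_trans[OF t_le pure_tensor_mono[OF nA nB p(2,4)]] .
  with p show ?thesis
    unfolding pure_tensors_above_def by blast
qed

lemma pure_tensor_eq_pw_inf_pure_tensors_above:
  fixes EA :: "('a::order) eff set" and EB :: "('b::order) eff set"
  assumes nA: "EA \<subseteq> natural_effects" and nB: "EB \<subseteq> natural_effects"
    and pdA: "pure_description TYPE('a)" and pdB: "pure_description TYPE('b)"
  shows "pure_tensor EA EB sa sb = pw_inf (pure_tensors_above EA EB (pure_tensor EA EB sa sb))"
    (is "_ = pw_inf ?X")
proof (rule leT_antisym)
  show "leT (pure_tensor EA EB sa sb) (pw_inf ?X)"
    by (rule le_pw_inf_pure_tensors_above,
        rule pure_tensors_above_nonempty[OF assms pure_tensor_in_min_tensor])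
  show "leT (pw_inf ?X) (pure_tensor EA EB sa sb)"
    unfolding leT_def
  proof
    fix z :: "'a eff \<times> 'b eff"
    show "leB (pw_inf ?X z) (pure_tensor EA EB sa sb z)"
    proof (cases "pw_inf ?X z = Bot")
      case False
      obtain la lb where z: "z = (la, lb)"
        by (rule prod.exhaust)
      have "pure_tensor EA EB pa pb \<in> ?X"
        if "pa \<in> pure_states" "sa \<le> pa" "pb \<in> pure_states" "sb \<le> pb" for pa pb
        using that pure_tensor_mono[OF nA nB] unfolding pure_tensors_above_def by blast
      then have "pure_tensor EA EB sa sb z = pw_inf ?X z"
        unfolding z using pure_tensor_apply_eq_if_pure_above[OF pdA pdB False[unfolded z]]
          pw_inf_apply_non_Bot[OF False[unfolded z]] by blast
      then show ?thesis by (simp add: leB_refl)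
    qed (simp add: leB_def)
  qed
qed

lemma min_tensor_eq_pw_inf_pure_tensors_above:
  fixes EA :: "('a::order) eff set" and EB :: "('b::order) eff set"
  assumes nA: "EA \<subseteq> natural_effects" and nB: "EB \<subseteq> natural_effects"
    and pdA: "pure_description TYPE('a)" and pdB: "pure_description TYPE('b)"
    and t: "t \<in> min_tensor EA EB"
  shows "t = pw_inf (pure_tensors_above EA EB t)"
proof (rule leT_antisym)
  show "leT t (pw_inf (pure_tensors_above EA EB t))"
    by (rule le_pw_inf_pure_tensors_above, rule pure_tensors_above_nonempty[OF assms])
  obtain F where F: "t = pw_inf F" "F \<noteq> {}" "F \<subseteq> {pure_tensor EA EB sa sb | sa sb. True}"
    using t by (rule min_tensorE)
  have "leT (pw_inf (pure_tensors_above EA EB t)) f" if f: "f \<in> F" for f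
  proof -
    obtain sa sb where f_eq: "f = pure_tensor EA EB sa sb"
      using f F(3) by blast
    have "pure_tensors_above EA EB f \<subseteq> pure_tensors_above EA EB t"
      using F(1) f by (simp add: pure_tensors_above_antimono pw_inf_le)
    moreover have "pure_tensors_above EA EB f \<noteq> {}"
      using pure_tensors_above_nonempty[OF nA nB pdA pdB] f_eq pure_tensor_in_min_tensor by blast
    ultimately have "leT (pw_inf (pure_tensors_above EA EB t)) (pw_inf (pure_tensors_above EA EB f))"
      by (blast intro: pw_inf_greatest pw_inf_le)
    then show ?thesis
      using pure_tensor_eq_pw_inf_pure_tensors_above[OF nA nB pdA pdB] f_eq by simp
  qed
  with F(1,2) show "leT (pw_inf (pure_tensors_above EA EB t)) t"
    by (simp add: pw_inf_greatest)
qed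

lemma pure_tensor_maximal_in_min_tensor:
  fixes EA :: "('a::order) eff set" and EB :: "('b::order) eff set"
  assumes A: "chu_space EA" and B: "chu_space EB"
    and pdA: "pure_description TYPE('a)" and pdB: "pure_description TYPE('b)"
    and pa: "pa \<in> pure_states" and pb: "pb \<in> pure_states"
  shows "maximal_in (min_tensor EA EB) leT (pure_tensor EA EB pa pb)"
  unfolding maximal_in_def
proof (intro conjI ballI impI)
  fix t assume t: "t \<in> min_tensor EA EB" and le: "leT (pure_tensor EA EB pa pb) t"
  obtain F where F: "t = pw_inf F" "F \<noteq> {}" "F \<subseteq> {pure_tensor EA EB sa sb | sa sb. True}"
    using t by (rule min_tensorE)
  have "f = pure_tensor EA EB pa pb" if f: "f \<in> F" for f
  proof -
    obtain sa sb where f_eq: "f = pure_tensor EA EB sa sb"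
      using f F(3) by blast
    have "leT (pure_tensor EA EB pa pb) f"
      using leT_trans[OF le[unfolded F(1)] pw_inf_le[OF f]] .
    then have "pa \<le> sa" "pb \<le> sb"
      using pure_tensor_le_imp_le[OF A B] f_eq by blast+
    then show ?thesis
      using pure_state_maximal[OF pdA pa] pure_state_maximal[OF pdB pb] f_eq by metis
  qed
  with F(2) have "F = {pure_tensor EA EB pa pb}" by blast
  with F(1) show "t = pure_tensor EA EB pa pb"
    by (simp add: pw_inf_singleton)
qed (rule pure_tensor_in_min_tensor)

lemma maximal_in_min_tensor_imp_pure_tensor:
  fixes EA :: "('a::order) eff set" and EB :: "('b::order) eff set"
  assumes nA: "EA \<subseteq> natural_effects" and nB: "EB \<subseteq> natural_effects"
    and pdA: "pure_description TYPE('a)" and pdB: "pure_description TYPE('b)"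
    and max: "maximal_in (min_tensor EA EB) leT t"
  shows "\<exists>pa pb. pa \<in> pure_states \<and> pb \<in> pure_states \<and> t = pure_tensor EA EB pa pb"
proof -
  have t: "t \<in> min_tensor EA EB"
    using max by (simp add: maximal_in_def)
  obtain pa pb where p: "pa \<in> pure_states" "pb \<in> pure_states" "leT t (pure_tensor EA EB pa pb)"
    using pure_tensors_above_nonempty[OF nA nB pdA pdB t] by (auto simp: pure_tensors_above_def)
  with max have "pure_tensor EA EB pa pb = t"
    using pure_tensor_in_min_tensor unfolding maximal_in_def by blast
  with p show ?thesis by blast
qed

lemma cmi_min_tensor_imp_pure_tensor:
  fixes EA :: "('a::order) eff set" and EB :: "('b::order) eff set"
  assumes nA: "EA \<subseteq> natural_effects" and nB: "EB \<subseteq> natural_effects"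
    and pdA: "pure_description TYPE('a)" and pdB: "pure_description TYPE('b)"
    and cmi: "cmi (min_tensor EA EB) leT t"
  shows "\<exists>pa pb. pa \<in> pure_states \<and> pb \<in> pure_states \<and> t = pure_tensor EA EB pa pb"
proof -
  have t: "t \<in> min_tensor EA EB"
    using cmi by (simp add: cmi_def)
  note nonempty = pure_tensors_above_nonempty[OF nA nB pdA pdB t]
  have "pw_inf (pure_tensors_above EA EB t) = t"
    using min_tensor_eq_pw_inf_pure_tensors_above[OF nA nB pdA pdB t] by (rule sym)
  then have "is_inf (min_tensor EA EB) leT (pure_tensors_above EA EB t) t"
    using is_inf_pw_inf[OF nonempty, of "min_tensor EA EB"] t by simp
  with cmi have "t \<in> pure_tensors_above EA EB t"
    by (rule cmiD[OF _ pure_tensors_above_subset_min_tensor nonempty])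
  then show ?thesis
    by (auto simp: pure_tensors_above_def)
qed

theorem mainTheorem6:
  fixes EA :: "('a::order) eff set" and EB :: "('b::order) eff set"
  assumes "chu_space EA" and "chu_space EB"
    and "pure_description TYPE('a)" and "pure_description TYPE('b)"
  shows "{t. cmi (min_tensor EA EB) leT t}
           = {pure_tensor EA EB sa sb | sa sb. sa \<in> pure_states \<and> sb \<in> pure_states}
       \<and> {pure_tensor EA EB sa sb | sa sb. sa \<in> pure_states \<and> sb \<in> pure_states}
           = {t. maximal_in (min_tensor EA EB) leT t}"
proof -
  let ?PT = "{pure_tensor EA EB sa sb | sa sb. sa \<in> pure_states \<and> sb \<in> pure_states}"
  have nat: "EA \<subseteq> natural_effects" "EB \<subseteq> natural_effects"
    using assms(1,2) by (simp_all add: chu_space_def)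
  have PT_max: "?PT \<subseteq> {t. maximal_in (min_tensor EA EB) leT t}"
    using pure_tensor_maximal_in_min_tensor[OF assms] by blast
  have "{t. maximal_in (min_tensor EA EB) leT t} \<subseteq> ?PT"
    using maximal_in_min_tensor_imp_pure_tensor[OF nat assms(3,4)] by blast
  moreover have "{t. cmi (min_tensor EA EB) leT t} \<subseteq> ?PT"
    using cmi_min_tensor_imp_pure_tensor[OF nat assms(3,4)] by blast
  moreover have "?PT \<subseteq> {t. cmi (min_tensor EA EB) leT t}"
    by (auto intro: maximal_in_imp_cmi pure_tensor_maximal_in_min_tensor[OF assms])
  ultimately show ?thesis
    using PT_max by (intro conjI subset_antisym)
qed

end
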